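(* Let $r\in C([0,\infty);(0,\infty))$ satisfy $r\in\mathrm{RV}_\infty(\mu)$ for some $\mu\in(-1,-1/2)$. Then $c(t):=\int_0^\infty r(s)r(s+t)\,ds$ is finite for every $t\ge0$ and $$\lim_{t\to\infty}\frac{c(t)}{t\,r^2(t)}=\frac{\Gamma(-1-2\mu)\Gamma(1+\mu)}{\Gamma(-\mu)}>0.$$
   Context: $f\in\mathrm{RV}_\infty(\mu)$ means $f(t)=t^\mu L(t)$ with $L$ positive and slowly varying at infinity, i.e. $L(xt)/L(t)\to1$ as $t\to\infty$ for every $x>0$. *)

theory Defs
  imports "HOL-Analysis.Analysis"
begin

definition slowly_varying_at_top :: "(real \<Rightarrow> real) \<Rightarrow> bool" where
  "slowly_varying_at_top L \<longleftrightarrow>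
     (\<forall>x>0. ((\<lambda>t. L (x * t) / L t) \<longlongrightarrow> 1) at_top)"

definition regularly_varying_at_top :: "real \<Rightarrow> (real \<Rightarrow> real) \<Rightarrow> bool" where
  "regularly_varying_at_top \<mu> f \<longleftrightarrow>
     (\<exists>L. (\<forall>t>0. L t > 0) \<and> slowly_varying_at_top L \<and> (\<forall>t>0. f t = t powr \<mu> * L t))"

end

theory Submission
  imports Defs
begin

text \<open>
  Substituting s = tu gives
  \<open>c(t)/(t r(t)\<^sup>2) = \<integral>\<^sub>0\<^sup>\<infinity> (r(ut)/r(t)) (r((1+u)t)/r(t)) du\<close>.  By regular variation the
  integrand tends to \<open>u\<^sup>\<mu>(1+u)\<^sup>\<mu>\<close>, whose integral is the Beta value
  \<open>B(1+\<mu>, -1-2\<mu>) = \<Gamma>(-1-2\<mu>)\<Gamma>(1+\<mu>)/\<Gamma>(-\<mu>)\<close>; dominated convergence applies because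
  Potter's bounds give \<open>r(ut)/r(t) \<le> K(u\<^sup>\<mu>\<^sup>+\<^sup>\<delta> + u\<^sup>\<mu>\<^sup>-\<^sup>\<delta>)\<close> uniformly in large t, with
  \<delta> small enough that these majorants remain integrable.
\<close>

text \<open>Beta integral on the half-line: substituting u = v/(1-v) turns
  \<open>\<integral>\<^sub>0\<^sup>\<infinity> u\<^sup>a (1+u)\<^sup>b du\<close> into the classical Beta integral over (0,1).\<close>
lemma beta_integral_halfline:
  fixes a b :: real
  assumes a: "a > -1" and ab: "a + b < -1"
  shows "(\<lambda>u. u powr a * (1+u) powr b) absolutely_integrable_on {0<..}
     \<and> integral {0<..} (\<lambda>u. u powr a * (1+u) powr b) = Beta (a+1) (-a-b-1)"
proof -
  define S :: "real set" where "S = {0<..<1}"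
  define g :: "real \<Rightarrow> real" where "g v = v / (1 - v)" for v
  define g' :: "real \<Rightarrow> real" where "g' v = 1 / (1 - v)^2" for v
  define f :: "real \<Rightarrow> real" where "f u = u powr a * (1+u) powr b" for u
  have der: "(g has_field_derivative g' x) (at x within S)" if "x \<in> S" for x
  proof -
    have "x \<noteq> 1" using that by (auto simp: S_def)
    then show ?thesis unfolding g_def g'_def
      by (auto intro!: derivative_eq_intros simp: field_simps power2_eq_square)
  qed
  have inj: "inj_on g S"
    unfolding inj_on_def S_def g_def by (auto simp: field_simps)
  have img: "g ` S = {0<..}"
  proof
    show "g ` S \<subseteq> {0<..}" by (auto simp: S_def g_def)
    show "{0<..} \<subseteq> g ` S"
    proof
      fix u :: real assume "u \<in> {0<..}"
      then have "g (u/(1+u)) = u" "u/(1+u) \<in> S" by (simp_all add: g_def S_def field_simps)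
      then show "u \<in> g ` S" by (metis image_eqI)
    qed
  qed
  have integrand: "\<bar>g' v\<bar> * f (g v) = v powr (a+1-1) * (1-v) powr ((-a-b-1) - 1)"
    if "v \<in> S" for v
  proof -
    have v: "0 < v" "v < 1" using that by (auto simp: S_def)
    have "1 + v/(1-v) = 1/(1-v)" using v by (simp add: field_simps)
    then have "\<bar>g' v\<bar> * f (g v) = (1-v) powr (-2) * (v powr a / (1-v) powr a) * (1-v) powr (-b)"
      using v by (simp add: g'_def f_def g_def powr_divide powr_minus_divide powr_realpow
          abs_of_pos divide_simps)
    also have "\<dots> = v powr a * ((1-v) powr (-2) * (1-v) powr (-a) * (1-v) powr (-b))"
      using v by (simp add: powr_minus divide_simps)
    also have "\<dots> = v powr a * (1-v) powr (-2 - a - b)"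
      using v by (simp add: powr_add[symmetric])
    moreover have "a + 1 - 1 = a" "(-a-b-1) - 1 = -2 - a - b" by simp_all
    ultimately show ?thesis by (simp only:)
  qed
  have beta: "((\<lambda>v. v powr (a+1-1) * (1-v) powr ((-a-b-1) - 1)) has_integral Beta (a+1) (-a-b-1)) S"
    unfolding S_def using has_integral_Beta_real[of "a+1" "-a-b-1"] a ab
    by (simp add: has_integral_Icc_iff_Ioo)
  then have absb: "(\<lambda>v. v powr (a+1-1) * (1-v) powr ((-a-b-1) - 1)) absolutely_integrable_on S"
    by (intro nonnegative_absolutely_integrable_1) auto
  have "(\<lambda>v. \<bar>g' v\<bar> * f (g v)) absolutely_integrable_on S
      \<and> integral S (\<lambda>v. \<bar>g' v\<bar> * f (g v)) = Beta (a+1) (-a-b-1)"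
  proof
    show "(\<lambda>v. \<bar>g' v\<bar> * f (g v)) absolutely_integrable_on S"
      by (rule absolutely_integrable_spike[OF absb, of "{}"]) (use integrand in auto)
    show "integral S (\<lambda>v. \<bar>g' v\<bar> * f (g v)) = Beta (a+1) (-a-b-1)"
      using integral_cong[of S "\<lambda>v. \<bar>g' v\<bar> * f (g v)", OF integrand] beta
      by (simp add: integral_unique)
  qed
  then have "f absolutely_integrable_on (g ` S) \<and> integral (g ` S) f = Beta (a+1) (-a-b-1)"
    using has_absolute_integral_change_of_variables_1'[of S g g' f "Beta (a+1) (-a-b-1)", OF _ der inj]
    by (simp add: S_def)
  then show ?thesis using img by (simp add: f_def[abs_def])
qed

lemma one_plus_powr_integrable:
  fixes p :: real
  assumes "p < -1"
  shows "(\<lambda>s. (1+s) powr p) absolutely_integrable_on {0<..}"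
proof -
  have "(\<lambda>s. s powr 0 * (1+s) powr p) absolutely_integrable_on {0<..}"
    using beta_integral_halfline[of 0 p] assms by auto
  then show ?thesis by (rule absolutely_integrable_spike[OF _ negligible_empty]) auto
qed

lemma two_term_power_product_integrable:
  fixes \<alpha> \<beta> :: real
  assumes "-1 < \<beta>" "\<beta> \<le> \<alpha>" "\<alpha> + \<alpha> < -1"
  shows "(\<lambda>u. (u powr \<alpha> + u powr \<beta>) * ((1+u) powr \<alpha> + (1+u) powr \<beta>)) integrable_on {0<..}"
proof -
  have beta: "(\<lambda>u. u powr a * (1+u) powr b) integrable_on {0<..}" if "a \<in> {\<alpha>, \<beta>}" "b \<in> {\<alpha>, \<beta>}" for a b
    using beta_integral_halfline[of a b] that assms
    unfolding absolutely_integrable_on_def by auto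
  have "(\<lambda>u. u powr \<alpha> * (1+u) powr \<alpha> + u powr \<alpha> * (1+u) powr \<beta>
          + (u powr \<beta> * (1+u) powr \<alpha> + u powr \<beta> * (1+u) powr \<beta>)) integrable_on {0<..}"
    by (intro integrable_add beta) auto
  then show ?thesis by (simp add: algebra_simps)
qed

text \<open>Baire category step of the uniform convergence theorem: if \<open>h(x+y) - h(x) \<rightarrow> 0\<close>
  for every y, then the sets \<open>E\<^sub>N = {y. \<forall>x\<ge>N. \<bar>h(x+y) - h x\<bar> \<le> \<epsilon>}\<close> are closed and cover
  the line, so one of them contains a whole interval.\<close>
lemma additive_uniform_on_interval:
  fixes h :: "real \<Rightarrow> real"
  assumes cont: "continuous_on UNIV h"
    and lim: "\<And>y. ((\<lambda>x. h (x+y) - h x) \<longlongrightarrow> 0) at_top" and e: "\<epsilon> > 0"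
  shows "\<exists>N y0 d. 0 < d \<and> (\<forall>x\<ge>N. \<forall>z. y0 \<le> z \<and> z \<le> y0 + d \<longrightarrow> \<bar>h (x+z) - h x\<bar> \<le> \<epsilon>)"
proof -
  define E where "E N = {y. \<forall>x\<ge>real N. \<bar>h (x+y) - h x\<bar> \<le> \<epsilon>}" for N :: nat
  have hc: "continuous_on UNIV (\<lambda>y. \<bar>h (x+y) - h x\<bar>)" for x
    by (intro continuous_intros continuous_on_compose2[OF cont]) auto
  have closed: "closed (E N)" for N
  proof -
    have "E N = (\<Inter>x\<in>{real N..}. {y. \<bar>h (x+y) - h x\<bar> \<le> \<epsilon>})"
      by (auto simp: E_def)
    moreover have "closed {y. \<bar>h (x+y) - h x\<bar> \<le> \<epsilon>}" for x
      by (rule closed_Collect_le[OF hc]) auto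
    ultimately show ?thesis by auto
  qed
  have cover: "\<exists>N. y \<in> E N" for y
  proof -
    obtain N0 where N0: "\<forall>x\<ge>N0. \<bar>h (x+y) - h x\<bar> < \<epsilon>"
      using lim[of y] e unfolding tendsto_iff eventually_at_top_linorder
      by (auto simp: dist_real_def)
    obtain N :: nat where "N0 \<le> real N" using real_arch_simple by blast
    then have "y \<in> E N" using N0 by (auto simp: E_def intro: less_imp_le)
    then show ?thesis by blast
  qed
  have "\<exists>N. \<not> UNIV \<subseteq> closure (- E N)"
  proof (rule ccontr)
    assume "\<not> ?thesis"
    then have dense: "UNIV \<subseteq> closure (- E N)" for N by blast
    have "(UNIV::real set) \<subseteq> closure (\<Inter>(range (\<lambda>N. - E N)))"
    proof (rule Baire)
      fix T assume "T \<in> range (\<lambda>N. - E N)"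
      then show "openin (top_of_set UNIV) T \<and> UNIV \<subseteq> closure T"
        using closed dense by auto
    qed simp_all
    moreover have "\<Inter>(range (\<lambda>N. - E N)) = {}" using cover by auto
    ultimately show False by simp
  qed
  then obtain N y0 where "y0 \<in> interior (E N)" by (auto simp: interior_closure)
  then obtain e0 where e0: "e0 > 0" "ball y0 e0 \<subseteq> E N" by (auto simp: mem_interior)
  have "\<forall>x\<ge>real N. \<forall>z. y0 \<le> z \<and> z \<le> y0 + e0/2 \<longrightarrow> \<bar>h (x+z) - h x\<bar> \<le> \<epsilon>"
  proof (intro allI impI)
    fix x z assume "real N \<le> x" "y0 \<le> z \<and> z \<le> y0 + e0/2"
    moreover have "z \<in> E N" using calculation e0 by (intro subsetD[OF e0(2)]) (auto simp: dist_real_def)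
    ultimately show "\<bar>h (x+z) - h x\<bar> \<le> \<epsilon>" by (auto simp: E_def)
  qed
  then show ?thesis using e0(1) by (intro exI[of _ "real N"] exI[of _ y0] exI[of _ "e0/2"]) auto
qed

text \<open>A uniform bound on one short interval is shifted to [0,d] and then
  chained along the finitely many points kd \<le> 1.\<close>
lemma additive_uniform_convergence:
  fixes h :: "real \<Rightarrow> real"
  assumes cont: "continuous_on UNIV h"
    and lim: "\<And>y. ((\<lambda>x. h (x+y) - h x) \<longlongrightarrow> 0) at_top" and e: "\<epsilon> > 0"
  shows "\<exists>X. \<forall>x\<ge>X. \<forall>y\<in>{0..1}. \<bar>h (x+y) - h x\<bar> \<le> \<epsilon>"
proof -
  obtain N y0 d where d: "d > 0"
    and interval: "\<forall>x\<ge>N. \<forall>z. y0 \<le> z \<and> z \<le> y0 + d \<longrightarrow> \<bar>h (x+z) - h x\<bar> \<le> \<epsilon>/3"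
    using additive_uniform_on_interval[OF cont lim, of "\<epsilon>/3"] e by auto
  have short_step: "\<bar>h (x+z) - h x\<bar> \<le> 2*\<epsilon>/3" if "x \<ge> N + \<bar>y0\<bar>" "0 \<le> z" "z \<le> d" for x z
  proof -
    have x': "x - y0 \<ge> N" using that by auto
    have "\<bar>h (x+z) - h (x - y0)\<bar> \<le> \<epsilon>/3"
      using interval[rule_format, OF x', of "y0+z"] that by simp
    moreover have "\<bar>h x - h (x - y0)\<bar> \<le> \<epsilon>/3"
      using interval[rule_format, OF x', of y0] d by simp
    ultimately show ?thesis
      using abs_triangle_ineq4[of "h (x+z) - h (x - y0)" "h x - h (x - y0)"] by simp
  qed
  define K where "K = nat \<lceil>1/d\<rceil>"
  have "eventually (\<lambda>x. \<bar>h (x+y) - h x\<bar> < \<epsilon>/3) at_top" for y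
    using lim[of y, unfolded tendsto_iff, rule_format, of "\<epsilon>/3"] e by (simp add: dist_real_def)
  then have "eventually (\<lambda>x. \<forall>k\<in>{..K}. \<bar>h (x + real k * d) - h x\<bar> < \<epsilon>/3) at_top"
    by (intro eventually_ball_finite) auto
  then obtain X1 where grid: "\<forall>x\<ge>X1. \<forall>k\<in>{..K}. \<bar>h (x + real k * d) - h x\<bar> < \<epsilon>/3"
    unfolding eventually_at_top_linorder by blast
  show ?thesis
  proof (intro exI[of _ "max X1 (N + \<bar>y0\<bar>)"] allI impI ballI)
    fix x y assume x: "max X1 (N + \<bar>y0\<bar>) \<le> x" and y: "y \<in> {0..1::real}"
    define k where "k = nat \<lfloor>y/d\<rfloor>"
    have k: "real k \<le> y/d" "y/d < real k + 1" "k \<le> K"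
    proof -
      have "y/d \<le> 1/d" using y d by (simp add: divide_right_mono)
      then show "k \<le> K" unfolding k_def K_def by linarith
      show "real k \<le> y/d" "y/d < real k + 1" using y d by (simp_all add: k_def)
    qed
    then have "\<bar>h (x + real k * d) - h x\<bar> < \<epsilon>/3" using grid x by auto
    moreover have "\<bar>h ((x + real k * d) + (y - real k * d)) - h (x + real k * d)\<bar> \<le> 2*\<epsilon>/3"
    proof (intro short_step)
      have "0 \<le> real k * d" "real k * d \<le> y" "y - real k * d \<le> d"
        using k d by (auto simp: field_simps)
      then show "N + \<bar>y0\<bar> \<le> x + real k * d" "0 \<le> y - real k * d" "y - real k * d \<le> d"
        using x by linarith+
    qed
    ultimately show "\<bar>h (x+y) - h x\<bar> \<le> \<epsilon>"
      using abs_triangle_ineq[of "h (x+y) - h (x + real k * d)" "h (x + real k * d) - h x"] by simp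
  qed
qed

text \<open>Additive Potter bound: eventually \<open>\<bar>h(x+y) - h(x)\<bar> \<le> \<eta>y + \<eta>\<close> for all y \<ge> 0,
  obtained by splitting [0,y] into unit steps.\<close>
lemma additive_potter_bound:
  fixes h :: "real \<Rightarrow> real"
  assumes cont: "continuous_on UNIV h"
    and lim: "\<And>y. ((\<lambda>x. h (x+y) - h x) \<longlongrightarrow> 0) at_top" and e: "\<eta> > 0"
  shows "\<exists>X. \<forall>x\<ge>X. \<forall>y\<ge>0. \<bar>h (x+y) - h x\<bar> \<le> \<eta>*y + \<eta>"
proof -
  obtain X where X: "\<forall>x\<ge>X. \<forall>y\<in>{0..1}. \<bar>h (x+y) - h x\<bar> \<le> \<eta>"
    using additive_uniform_convergence[OF cont lim e] by auto
  have steps: "\<forall>x\<ge>X. \<forall>y. 0 \<le> y \<and> y \<le> real n + 1 \<longrightarrow> \<bar>h (x+y) - h x\<bar> \<le> \<eta>*(real n+1)" for n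
  proof (induction n)
    case 0
    then show ?case using X by auto
  next
    case (Suc n)
    show ?case
    proof (intro allI impI)
      fix x y assume x: "x \<ge> X" and y: "0 \<le> y \<and> y \<le> real (Suc n) + 1"
      show "\<bar>h (x+y) - h x\<bar> \<le> \<eta>*(real (Suc n)+1)"
      proof (cases "y \<le> real n + 1")
        case True
        then have "\<bar>h (x+y) - h x\<bar> \<le> \<eta>*(real n+1)" using Suc.IH x y by auto
        also have "\<dots> \<le> \<eta>*(real (Suc n)+1)" using e by simp
        finally show ?thesis .
      next
        case False
        have "\<bar>h ((x+1) + (y-1)) - h (x+1)\<bar> \<le> \<eta>*(real n+1)"
          using Suc.IH[rule_format, of "x+1" "y-1"] x y False by auto
        moreover have "\<bar>h (x+1) - h x\<bar> \<le> \<eta>" using X x by force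
        ultimately show ?thesis by (simp add: algebra_simps)
      qed
    qed
  qed
  show ?thesis
  proof (intro exI[of _ X] allI impI)
    fix x y :: real assume x: "x \<ge> X" and y: "y \<ge> 0"
    define n where "n = nat \<lfloor>y\<rfloor>"
    have n: "real n \<le> y" "y \<le> real n + 1" using y by (auto simp: n_def)
    have "\<bar>h (x+y) - h x\<bar> \<le> \<eta>*(real n+1)" using steps[of n] x y n by auto
    also have "\<dots> \<le> \<eta>*y + \<eta>" using n e by (simp add: algebra_simps)
    finally show "\<bar>h (x+y) - h x\<bar> \<le> \<eta>*y + \<eta>" .
  qed
qed

lemma slowly_varying_log_exp:
  fixes L :: "real \<Rightarrow> real"
  assumes pos: "\<forall>t>0. L t > 0" and cont: "continuous_on {0<..} L"
    and sv: "slowly_varying_at_top L"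
  shows "continuous_on UNIV (\<lambda>s. ln (L (exp s)))"
    and "((\<lambda>x. ln (L (exp (x+y))) - ln (L (exp x))) \<longlongrightarrow> 0) at_top"
proof -
  have "continuous_on UNIV (\<lambda>s. L (exp s))"
    by (rule continuous_on_compose2[OF cont]) (auto intro: continuous_intros)
  moreover have "L (exp s) \<noteq> 0" for s using pos by (metis exp_gt_zero less_irrefl)
  ultimately show "continuous_on UNIV (\<lambda>s. ln (L (exp s)))"
    by (intro continuous_intros) auto
  have "((\<lambda>t. L (exp y * t) / L t) \<longlongrightarrow> 1) at_top"
    using sv unfolding slowly_varying_at_top_def by auto
  then have "((\<lambda>x. L (exp y * exp x) / L (exp x)) \<longlongrightarrow> 1) at_top"
    using filterlim_compose exp_at_top by (fastforce simp: o_def)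
  then have "((\<lambda>x. ln (L (exp y * exp x) / L (exp x))) \<longlongrightarrow> ln 1) at_top"
    by (intro tendsto_ln) simp_all
  moreover have "ln (L (exp (x+y))) - ln (L (exp x)) = ln (L (exp y * exp x) / L (exp x))" for x
  proof -
    have "L (exp y * exp x) > 0" "L (exp x) > 0" using pos by simp_all
    then show ?thesis by (simp add: ln_div exp_add mult.commute)
  qed
  ultimately show "((\<lambda>x. ln (L (exp (x+y))) - ln (L (exp x))) \<longlongrightarrow> 0) at_top" by simp
qed

lemma slowly_varying_potter:
  fixes L :: "real \<Rightarrow> real"
  assumes pos: "\<forall>t>0. L t > 0" and cont: "continuous_on {0<..} L"
    and sv: "slowly_varying_at_top L" and e: "\<eta> > 0"
  shows "\<exists>T>0. \<forall>t\<ge>T. \<forall>x\<ge>1.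
           L (x*t) \<le> exp \<eta> * x powr \<eta> * L t \<and> L t \<le> exp \<eta> * x powr \<eta> * L (x*t)"
proof -
  define h where "h s = ln (L (exp s))" for s
  obtain X where X: "\<forall>x\<ge>X. \<forall>y\<ge>0. \<bar>h (x+y) - h x\<bar> \<le> \<eta>*y + \<eta>"
    using additive_potter_bound[OF slowly_varying_log_exp[OF pos cont sv] e]
    unfolding h_def by blast
  show ?thesis
  proof (intro exI[of _ "exp X"] conjI allI impI)
    fix t x :: real assume t: "exp X \<le> t" and x: "1 \<le> x"
    have tx: "t > 0" "x > 0" using t x exp_gt_zero[of X] by linarith+
    then have "ln t \<ge> X" using t by (metis exp_le_cancel_iff exp_ln)
    have "\<bar>h (ln t + ln x) - h (ln t)\<bar> \<le> \<eta> * ln x + \<eta>" using X \<open>ln t \<ge> X\<close> x by auto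
    then have log_bound: "\<bar>ln (L (x*t)) - ln (L t)\<bar> \<le> \<eta> * ln x + \<eta>"
      using tx by (simp add: h_def exp_add mult.commute)
    have L: "L (x*t) > 0" "L t > 0" using pos tx by auto
    have "L (x*t) = exp (ln (L (x*t)))" "L t = exp (ln (L t))" using L by simp_all
    moreover have "exp \<eta> * x powr \<eta> * L t = exp (ln (L t) + \<eta> * ln x + \<eta>)"
      "exp \<eta> * x powr \<eta> * L (x*t) = exp (ln (L (x*t)) + \<eta> * ln x + \<eta>)"
      using L tx by (simp_all add: exp_add powr_def mult.commute)
    ultimately show "L (x*t) \<le> exp \<eta> * x powr \<eta> * L t" "L t \<le> exp \<eta> * x powr \<eta> * L (x*t)"
      using log_bound by (metis abs_le_D1 abs_le_D2 exp_le_cancel_iff diff_le_eq add.commute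
          add.left_commute minus_diff_eq)+
  qed simp
qed

lemma regularly_varying_ratio_tendsto:
  fixes r :: "real \<Rightarrow> real"
  assumes rv: "regularly_varying_at_top \<mu> r" and x: "x > 0"
  shows "((\<lambda>t. r (x*t) / r t) \<longlongrightarrow> x powr \<mu>) at_top"
proof -
  obtain L where L: "\<forall>t>0. L t > 0" "slowly_varying_at_top L" and rL: "\<forall>t>0. r t = t powr \<mu> * L t"
    using rv unfolding regularly_varying_at_top_def by blast
  have "((\<lambda>t. x powr \<mu> * (L (x*t) / L t)) \<longlongrightarrow> x powr \<mu> * 1) at_top"
    using L(2) x unfolding slowly_varying_at_top_def by (intro tendsto_mult tendsto_const) auto
  moreover have "eventually (\<lambda>t. x powr \<mu> * (L (x*t) / L t) = r (x*t) / r t) at_top"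
    using eventually_gt_at_top[of 0]
  proof eventually_elim
    case (elim t)
    then have "L t > 0" using L(1) by simp
    then show ?case using rL elim x by (simp add: powr_mult)
  qed
  ultimately show ?thesis by (simp add: Lim_transform_eventually)
qed

lemma regularly_varying_potter:
  fixes r :: "real \<Rightarrow> real"
  assumes cont: "continuous_on {0<..} r" and rv: "regularly_varying_at_top \<mu> r" and \<delta>: "\<delta> > 0"
  shows "\<exists>T\<ge>1. \<forall>t\<ge>T. \<forall>x\<ge>1.
           x powr (\<mu>-\<delta>) * r t \<le> exp \<delta> * r (x*t) \<and> r (x*t) \<le> exp \<delta> * x powr (\<mu>+\<delta>) * r t"
proof -
  obtain L where Lpos: "\<forall>t>0. L t > 0" and sv: "slowly_varying_at_top L"
    and rL: "\<forall>t>0. r t = t powr \<mu> * L t"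
    using rv unfolding regularly_varying_at_top_def by blast
  have "continuous_on {0<..} (\<lambda>t. r t / t powr \<mu>)"
    using cont by (intro continuous_intros) auto
  then have "continuous_on {0<..} L"
    by (rule continuous_on_eq) (use rL in auto)
  then obtain T0 where T0: "T0 > 0" and potter: "\<forall>t\<ge>T0. \<forall>x\<ge>1.
      L (x*t) \<le> exp \<delta> * x powr \<delta> * L t \<and> L t \<le> exp \<delta> * x powr \<delta> * L (x*t)"
    using slowly_varying_potter[OF Lpos _ sv \<delta>] by blast
  show ?thesis
  proof (intro exI[of _ "max T0 1"] conjI allI impI)
    fix t x :: real assume t: "max T0 1 \<le> t" and x: "1 \<le> x"
    have tx: "t > 0" "x > 0" "t \<ge> T0" using t x by auto
    have r: "r (x*t) = x powr \<mu> * t powr \<mu> * L (x*t)" "r t = t powr \<mu> * L t"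
      using rL tx by (simp_all add: powr_mult)
    have "x powr (\<mu>-\<delta>) * r t = x powr (\<mu>-\<delta>) * t powr \<mu> * L t" using r by simp
    also have "\<dots> \<le> x powr (\<mu>-\<delta>) * t powr \<mu> * (exp \<delta> * x powr \<delta> * L (x*t))"
      using potter tx x by (intro mult_left_mono) auto
    also have "\<dots> = exp \<delta> * ((x powr (\<mu>-\<delta>) * x powr \<delta>) * t powr \<mu> * L (x*t))"
      by (simp only: mult_ac)
    also have "\<dots> = exp \<delta> * r (x*t)"
      by (simp add: r(1) flip: powr_add)
    finally show "x powr (\<mu>-\<delta>) * r t \<le> exp \<delta> * r (x*t)" .
    have "r (x*t) \<le> x powr \<mu> * t powr \<mu> * (exp \<delta> * x powr \<delta> * L t)"
      unfolding r using potter tx x by (intro mult_left_mono) auto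
    also have "\<dots> = exp \<delta> * x powr (\<mu>+\<delta>) * r t"
      by (simp add: r powr_add mult_ac)
    finally show "r (x*t) \<le> exp \<delta> * x powr (\<mu>+\<delta>) * r t" .
  qed simp
qed

lemma continuous_on_Icc_bounded_above:
  fixes r :: "real \<Rightarrow> real"
  assumes "continuous_on {a..b} r"
  obtains M where "\<And>s. a \<le> s \<Longrightarrow> s \<le> b \<Longrightarrow> r s \<le> M"
proof -
  have "bounded (r ` {a..b})"
    by (intro compact_imp_bounded compact_continuous_image assms compact_Icc)
  then obtain M where "\<forall>y\<in>r ` {a..b}. \<bar>y\<bar> \<le> M" by (auto simp: bounded_iff)
  then have "r s \<le> M" if "a \<le> s" "s \<le> b" for s
    using that by (metis abs_le_D1 atLeastAtMost_iff image_eqI)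
  then show ?thesis by (rule that)
qed

lemma potter_envelope:
  fixes r :: "real \<Rightarrow> real"
  assumes cont: "continuous_on {0..} r" and pos: "\<And>s. 0 \<le> s \<Longrightarrow> 0 < r s"
    and T: "T \<ge> 1" and E: "E > 0" and \<alpha>: "\<alpha> \<le> 0"
    and upper: "\<And>x. 1 \<le> x \<Longrightarrow> r (x*T) \<le> E * x powr \<alpha> * r T"
  shows "\<exists>K. \<forall>s\<ge>0. r s \<le> K * (1+s) powr \<alpha>"
proof -
  obtain M where M: "\<And>s. 0 \<le> s \<Longrightarrow> s \<le> T \<Longrightarrow> r s \<le> M"
    using continuous_on_Icc_bounded_above[OF continuous_on_subset[OF cont]] by auto
  define K where "K = max (M * (1+T) powr (-\<alpha>)) (E * r T * (2*T) powr (-\<alpha>))"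
  have "r s \<le> K * (1+s) powr \<alpha>" if s: "s \<ge> 0" for s
  proof (cases "s \<le> T")
    case True
    have "M \<ge> 0" using M[of 0] pos[of 0] T by simp
    have "(1+T) powr (-\<alpha>) * (1+T) powr \<alpha> = 1"
      using T by (simp add: powr_minus_divide)
    then have "r s \<le> M * ((1+T) powr (-\<alpha>) * (1+T) powr \<alpha>)"
      using M s True by simp
    also have "\<dots> \<le> M * ((1+T) powr (-\<alpha>) * (1+s) powr \<alpha>)"
      using True s \<alpha> \<open>M \<ge> 0\<close> by (intro mult_left_mono powr_mono2') auto
    also have "\<dots> \<le> K * (1+s) powr \<alpha>"
      by (simp add: K_def mult.assoc[symmetric] mult_right_mono)
    finally show ?thesis .
  next
    case False
    have "r s = r ((s/T) * T)" using T by simp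
    also have "\<dots> \<le> E * (s/T) powr \<alpha> * r T" using False T by (intro upper) simp
    also have "\<dots> \<le> E * ((1+s)/(2*T)) powr \<alpha> * r T"
      using False T E pos[of T] \<alpha>
      by (intro mult_right_mono mult_left_mono powr_mono2') (auto simp: field_simps)
    also have "\<dots> = (E * r T * (2*T) powr (-\<alpha>)) * (1+s) powr \<alpha>"
      using s T by (simp add: powr_divide powr_minus_divide)
    also have "\<dots> \<le> K * (1+s) powr \<alpha>"
      by (simp add: K_def mult_right_mono)
    finally show ?thesis .
  qed
  then show ?thesis by blast
qed

text \<open>Uniform bound on the ratio \<open>r(tu)/r(t)\<close> for t \<ge> T and all u > 0: by the upper
  Potter bound for u \<ge> 1, the lower one for tu \<ge> T, and boundedness of r on [0,T]
  otherwise.\<close>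
lemma potter_ratio_bound:
  fixes r :: "real \<Rightarrow> real"
  assumes cont: "continuous_on {0..} r" and pos: "\<And>s. 0 \<le> s \<Longrightarrow> 0 < r s"
    and T: "T > 0" and E: "E > 0" and \<beta>: "\<beta> \<le> 0"
    and upper: "\<And>t x. T \<le> t \<Longrightarrow> 1 \<le> x \<Longrightarrow> r (x*t) \<le> E * x powr \<alpha> * r t"
    and lower: "\<And>t x. T \<le> t \<Longrightarrow> 1 \<le> x \<Longrightarrow> x powr \<beta> * r t \<le> E * r (x*t)"
  shows "\<exists>K. \<forall>t\<ge>T. \<forall>u>0. r (u*t) / r t \<le> K * (u powr \<alpha> + u powr \<beta>)"
proof -
  obtain M where M: "\<And>s. 0 \<le> s \<Longrightarrow> s \<le> T \<Longrightarrow> r s \<le> M"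
    using continuous_on_Icc_bounded_above[OF continuous_on_subset[OF cont]] by auto
  define K where "K = max E (M * E / r T)"
  have "r (t*u) / r t \<le> K * (u powr \<alpha> + u powr \<beta>)" if t: "T \<le> t" and u: "0 < u" for t u
  proof -
    have rt: "r t > 0" using pos t T by simp
    have "0 \<le> K" using E by (simp add: K_def)
    then have K\<alpha>: "K * u powr \<alpha> \<le> K * (u powr \<alpha> + u powr \<beta>)"
      and K\<beta>: "K * u powr \<beta> \<le> K * (u powr \<alpha> + u powr \<beta>)"
      by (simp_all add: distrib_left)
    consider "1 \<le> u" | "u < 1" "T \<le> t*u" | "t*u < T" by linarith
    then show ?thesis
    proof cases
      case 1
      then have "r (t*u) \<le> E * u powr \<alpha> * r t" using upper[OF t 1] by (simp add: mult.commute)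
      then have "r (t*u) / r t \<le> E * u powr \<alpha>" using rt by (simp add: divide_le_eq)
      also have "\<dots> \<le> K * u powr \<alpha>" by (simp add: K_def mult_right_mono)
      finally show ?thesis using K\<alpha> by simp
    next
      case 2
      then have "(1/u) powr \<beta> * r (t*u) \<le> E * r ((1/u) * (t*u))"
        using u by (intro lower) (auto simp: field_simps)
      then have "r (t*u) \<le> E * u powr \<beta> * r t"
        using u by (simp add: powr_divide field_simps)
      then have "r (t*u) / r t \<le> E * u powr \<beta>" using rt by (simp add: divide_le_eq)
      also have "\<dots> \<le> K * u powr \<beta>" by (simp add: K_def mult_right_mono)
      finally show ?thesis using K\<beta> by simp
    next
      case 3
      have rT: "r T > 0" using pos T by simp
      have "(1/u) powr \<beta> * r T \<le> (t/T) powr \<beta> * r T"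
        using 3 T t u \<beta> rT by (intro mult_right_mono powr_mono2') (auto simp: field_simps)
      also have "\<dots> \<le> E * r ((t/T) * T)" using t T by (intro lower) auto
      finally have rT_bound: "r T \<le> E * u powr \<beta> * r t"
        using u T by (simp add: powr_divide field_simps)
      have "r (t*u) \<le> M" using M 3 t T u by simp
      moreover have "0 \<le> M" using calculation pos[of "t*u"] t T u by simp
      ultimately have "r (t*u) \<le> (M / r T) * r T" using rT by simp
      also have "\<dots> \<le> (M / r T) * (E * u powr \<beta> * r t)"
        using rT_bound rT \<open>0 \<le> M\<close> by (intro mult_left_mono) simp_all
      finally have "r (t*u) / r t \<le> M * E / r T * u powr \<beta>" using rt by (simp add: divide_le_eq)
      also have "\<dots> \<le> K * u powr \<beta>" by (rule mult_right_mono) (simp_all add: K_def)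
      finally show ?thesis using K\<beta> by simp
    qed
  qed
  then show ?thesis by (metis mult.commute)
qed

text \<open>Integrability of the autocovariance integrand: a global envelope \<open>K(1+s)\<^sup>\<alpha>\<close> with
  2\<alpha> < -1 dominates \<open>r(s) r(s+t)\<close> by the integrable \<open>K\<^sup>2(1+s)\<^sup>2\<^sup>\<alpha>\<close>.\<close>
lemma autocovariance_integrable:
  fixes r :: "real \<Rightarrow> real"
  assumes cont: "continuous_on {0..} r" and pos: "\<And>s. 0 \<le> s \<Longrightarrow> 0 < r s"
    and env: "\<And>s. 0 \<le> s \<Longrightarrow> r s \<le> K * (1+s) powr \<alpha>" and \<alpha>: "\<alpha> < -1/2" and t: "0 \<le> t"
  shows "(\<lambda>s. r s * r (s+t)) absolutely_integrable_on {0<..}"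
proof -
  have "continuous_on {0<..} (\<lambda>s. r s * r (s+t))"
    using t by (intro continuous_intros continuous_on_subset[OF cont]
        continuous_on_compose2[OF cont]) auto
  then have measurable: "(\<lambda>s. r s * r (s+t)) \<in> borel_measurable (lebesgue_on {0<..})"
    by (rule continuous_imp_measurable_on_sets_lebesgue) simp
  have "(\<lambda>s. (1+s) powr (2*\<alpha>)) absolutely_integrable_on {0<..}"
    using \<alpha> by (intro one_plus_powr_integrable) simp
  then have majorant: "(\<lambda>s. K\<^sup>2 * (1+s) powr (2*\<alpha>)) integrable_on {0<..}"
    unfolding absolutely_integrable_on_def by (intro integrable_on_mult_right) simp
  have "norm (r s * r (s+t)) \<le> K\<^sup>2 * (1+s) powr (2*\<alpha>)" if s: "s \<in> {0<..}" for s
  proof -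
    have "0 \<le> K" using env[of 0] pos[of 0] by simp
    have "r (s+t) \<le> K * (1+s+t) powr \<alpha>" using env[of "s+t"] s t by (simp add: add.assoc)
    also have "\<dots> \<le> K * (1+s) powr \<alpha>"
      using \<open>0 \<le> K\<close> s t \<alpha> by (intro mult_left_mono powr_mono2') auto
    finally have "r s * r (s+t) \<le> (K * (1+s) powr \<alpha>) * (K * (1+s) powr \<alpha>)"
      using env[of s] pos[of s] pos[of "s+t"] s t by (intro mult_mono) auto
    also have "\<dots> = K\<^sup>2 * (1+s) powr (2*\<alpha>)"
      by (simp add: power2_eq_square powr_add[symmetric] mult_ac)
    finally show ?thesis using pos[of s] pos[of "s+t"] s t by simp
  qed
  then show ?thesis
    by (intro measurable_bounded_by_integrable_imp_absolutely_integrable[OF measurable _ majorant])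
      auto
qed

lemma integrable_Ici_iff_Ioi:
  fixes f :: "real \<Rightarrow> 'a::banach"
  shows "f integrable_on {0..} \<longleftrightarrow> f integrable_on {0<..}"
  by (rule integrable_spike_set_eq) (rule negligible_subset[of "{0}"]; auto)

lemma integral_Ici_eq_Ioi:
  fixes f :: "real \<Rightarrow> 'a::banach"
  shows "integral {0..} f = integral {0<..} f"
  by (rule integral_spike_set; rule negligible_subset[of "{0}"]) auto

lemma integral_halfline_scale:
  fixes f :: "real \<Rightarrow> real"
  assumes t: "t > 0" and f: "f absolutely_integrable_on {0<..}"
  shows "(\<lambda>u. t * f (t*u)) absolutely_integrable_on {0<..}"
    and "integral {0<..} (\<lambda>u. t * f (t*u)) = integral {0<..} f"
proof -
  have der: "((\<lambda>u. t*u) has_field_derivative t) (at x within {0<..})" for x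
    by (auto intro!: derivative_eq_intros)
  have inj: "inj_on (\<lambda>u. t*u) {0<..}" using t by (auto simp: inj_on_def)
  have "(\<lambda>u. t*u) ` {0<..} = {0<..}"
  proof
    show "(\<lambda>u. t*u) ` {0<..} \<subseteq> {0<..}" using t by auto
    show "{0<..} \<subseteq> (\<lambda>u. t*u) ` {0<..}"
    proof
      fix s :: real assume "s \<in> {0<..}"
      then have "s/t \<in> {0<..}" "s = t*(s/t)" using t by auto
      then show "s \<in> (\<lambda>u. t*u) ` {0<..}" by blast
    qed
  qed
  then have "(\<lambda>u. \<bar>t\<bar> * f (t*u)) absolutely_integrable_on {0<..} \<and>
      integral {0<..} (\<lambda>u. \<bar>t\<bar> * f (t*u)) = integral {0<..} f"
    using has_absolute_integral_change_of_variables_1'[of "{0<..}" "\<lambda>u. t*u" "\<lambda>_. t" f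
        "integral {0<..} f", OF _ der inj] f by simp
  then show "(\<lambda>u. t * f (t*u)) absolutely_integrable_on {0<..}"
    and "integral {0<..} (\<lambda>u. t * f (t*u)) = integral {0<..} f"
    using t by simp_all
qed

text \<open>Dominated convergence along a real parameter t \<rightarrow> \<infinity>, reduced to the
  sequential theorem via arbitrary sequences tending to infinity.\<close>
lemma dominated_convergence_at_top:
  fixes f :: "real \<Rightarrow> 'n::euclidean_space \<Rightarrow> real"
  assumes f: "\<And>t. T \<le> t \<Longrightarrow> f t integrable_on S" and h: "h integrable_on S"
    and le: "\<And>t x. T \<le> t \<Longrightarrow> x \<in> S \<Longrightarrow> norm (f t x) \<le> h x"
    and conv: "\<And>x. x \<in> S \<Longrightarrow> ((\<lambda>t. f t x) \<longlongrightarrow> g x) at_top"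
  shows "((\<lambda>t. integral S (f t)) \<longlongrightarrow> integral S g) at_top"
proof (rule tendsto_at_topI_sequentially)
  fix X :: "nat \<Rightarrow> real" assume X: "filterlim X at_top sequentially"
  define Y where "Y n = max T (X n)" for n
  have Y: "T \<le> Y n" for n by (simp add: Y_def)
  have "filterlim Y at_top sequentially"
    by (rule filterlim_at_top_mono[OF X]) (simp add: Y_def)
  then have "(\<lambda>n. integral S (f (Y n))) \<longlonglongrightarrow> integral S g"
    using f Y h le conv filterlim_compose
    by (intro dominated_convergence(2)[where h=h]) blast+
  moreover have "eventually (\<lambda>n. integral S (f (Y n)) = integral S (f (X n))) sequentially"
    using X[unfolded filterlim_at_top, rule_format, of T]
    by (rule eventually_mono) (simp add: Y_def max_absorb2)
  ultimately show "(\<lambda>n. integral S (f (X n))) \<longlonglongrightarrow> integral S g"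
    by (rule Lim_transform_eventually)
qed

text \<open>Substituting s = tu gives
  \<open>c(t)/(t r(t)\<^sup>2) = \<integral>\<^sub>0\<^sup>\<infinity> F\<^sub>t(u) du\<close> with \<open>F\<^sub>t(u) = (r(ut)/r(t)) (r((1+u)t)/r(t))\<close>;
  the integrand tends to \<open>u\<^sup>\<mu>(1+u)\<^sup>\<mu>\<close> and is dominated by \<open>g(u) g(1+u)\<close>.\<close>
lemma autocovariance_limit:
  fixes r g :: "real \<Rightarrow> real"
  assumes pos: "\<And>s. 0 \<le> s \<Longrightarrow> 0 < r s" and T: "T > 0"
    and integrable: "\<And>t. T \<le> t \<Longrightarrow> (\<lambda>s. r s * r (s+t)) absolutely_integrable_on {0<..}"
    and ratio_lim: "\<And>x. 0 < x \<Longrightarrow> ((\<lambda>t. r (x*t) / r t) \<longlongrightarrow> x powr \<mu>) at_top"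
    and ratio_bound: "\<And>t u. T \<le> t \<Longrightarrow> 0 < u \<Longrightarrow> r (u*t) / r t \<le> g u"
    and dominant: "(\<lambda>u. g u * g (1+u)) integrable_on {0<..}"
  shows "((\<lambda>t. integral {0..} (\<lambda>s. r s * r (s+t)) / (t * (r t)\<^sup>2))
           \<longlongrightarrow> integral {0<..} (\<lambda>u. u powr \<mu> * (1+u) powr \<mu>)) at_top"
proof -
  define F where "F t u = r (u*t) / r t * (r ((1+u)*t) / r t)" for t u
  have scaled: "(\<lambda>u. t * (r (t*u) * r (t*u + t))) absolutely_integrable_on {0<..}"
    "integral {0..} (\<lambda>s. r s * r (s+t)) = integral {0<..} (\<lambda>u. t * (r (t*u) * r (t*u + t)))"
    if "T \<le> t" for t
    using integral_halfline_scale[of t "\<lambda>s. r s * r (s+t)"] integrable[OF that] that T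
    by (simp_all add: integral_Ici_eq_Ioi)
  have F_eq: "F t = (\<lambda>u. inverse (t * (r t)\<^sup>2) * (t * (r (t*u) * r (t*u + t))))" if "T \<le> t" for t
    using that T pos[of t] by (auto simp: F_def fun_eq_iff power2_eq_square field_simps)
  have "((\<lambda>t. integral {0<..} (F t)) \<longlongrightarrow> integral {0<..} (\<lambda>u. u powr \<mu> * (1+u) powr \<mu>)) at_top"
  proof (rule dominated_convergence_at_top[where T=T])
    show "F t integrable_on {0<..}" if "T \<le> t" for t
    proof -
      have "(\<lambda>u. t * (r (t*u) * r (t*u + t))) integrable_on {0<..}"
        using scaled(1)[OF that] unfolding absolutely_integrable_on_def by blast
      then show ?thesis unfolding F_eq[OF that] by (rule integrable_on_mult_right)
    qed
    show "norm (F t u) \<le> g u * g (1+u)" if "T \<le> t" "u \<in> {0<..}" for t u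
    proof -
      have factors: "0 < r (u*t) / r t" "0 < r ((1+u)*t) / r t" using pos that T by simp_all
      then have "F t u \<le> g u * g (1+u)" unfolding F_def
        using ratio_bound[of t u] ratio_bound[of t "1+u"] that by (intro mult_mono) auto
      moreover have "0 \<le> F t u" unfolding F_def by (intro mult_nonneg_nonneg less_imp_le factors)
      ultimately show ?thesis by simp
    qed
    show "((\<lambda>t. F t u) \<longlongrightarrow> u powr \<mu> * (1+u) powr \<mu>) at_top" if "u \<in> {0<..}" for u
      unfolding F_def using that by (intro tendsto_mult ratio_lim) auto
  qed (use dominant in simp)
  moreover have "eventually (\<lambda>t. integral {0<..} (F t)
      = integral {0..} (\<lambda>s. r s * r (s+t)) / (t * (r t)\<^sup>2)) at_top"
    using eventually_ge_at_top[of T]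
    by eventually_elim (simp add: F_eq scaled(2) divide_inverse mult.commute)
  ultimately show ?thesis by (rule Lim_transform_eventually)
qed

lemma autocovariance_constant:
  fixes \<mu> :: real
  assumes "-1 < \<mu>" "\<mu> < -1/2"
  shows "integral {0<..} (\<lambda>u. u powr \<mu> * (1+u) powr \<mu>)
      = Gamma (-1 - 2*\<mu>) * Gamma (1 + \<mu>) / Gamma (-\<mu>)"
    and "Gamma (-1 - 2*\<mu>) * Gamma (1 + \<mu>) / Gamma (-\<mu>) > 0"
proof -
  have args: "\<mu>+1 = 1+\<mu>" "-\<mu>-\<mu>-1 = -1 - 2*\<mu>" "(1+\<mu>) + (-1 - 2*\<mu>) = -\<mu>" by simp_all
  have "integral {0<..} (\<lambda>u. u powr \<mu> * (1+u) powr \<mu>) = Beta (\<mu>+1) (-\<mu>-\<mu>-1)"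
    using beta_integral_halfline[of \<mu> \<mu>] assms by simp
  also have "\<dots> = Gamma (1+\<mu>) * Gamma (-1 - 2*\<mu>) / Gamma ((1+\<mu>) + (-1 - 2*\<mu>))"
    unfolding args(1,2) Beta_def ..
  also have "\<dots> = Gamma (-1 - 2*\<mu>) * Gamma (1 + \<mu>) / Gamma (-\<mu>)"
    unfolding args(3) by (simp add: mult.commute)
  finally show "integral {0<..} (\<lambda>u. u powr \<mu> * (1+u) powr \<mu>)
      = Gamma (-1 - 2*\<mu>) * Gamma (1 + \<mu>) / Gamma (-\<mu>)" .
  show "Gamma (-1 - 2*\<mu>) * Gamma (1 + \<mu>) / Gamma (-\<mu>) > 0"
    using assms by (intro divide_pos_pos mult_pos_pos Gamma_real_pos) simp_all
qed

theorem theorem7p1: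
  fixes r :: "real \<Rightarrow> real" and \<mu> :: real
  assumes cont: "continuous_on {0..} r"
    and pos: "\<forall>t\<ge>0. r t > 0"
    and rv: "regularly_varying_at_top \<mu> r"
    and mu: "-1 < \<mu>" "\<mu> < -1/2"
  shows "(\<forall>t\<ge>0. (\<lambda>s. r s * r (s + t)) integrable_on {0..})
    \<and> ((\<lambda>t. integral {0..} (\<lambda>s. r s * r (s + t)) / (t * (r t)\<^sup>2))
         \<longlongrightarrow> Gamma (-1 - 2*\<mu>) * Gamma (1 + \<mu>) / Gamma (-\<mu>)) at_top
    \<and> Gamma (-1 - 2*\<mu>) * Gamma (1 + \<mu>) / Gamma (-\<mu>) > 0"
proof -
  obtain \<delta> :: real where \<delta>: "0 < \<delta>" "\<mu> + \<delta> < -1/2" "-1 < \<mu> - \<delta>"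
    using mu by (intro that[of "min ((-1/2 - \<mu>)/2) ((1 + \<mu>)/2)"]) (auto simp: min_def field_simps)
  have pos': "\<And>s. 0 \<le> s \<Longrightarrow> 0 < r s" using pos by simp
  have cont': "continuous_on {0<..} r" using cont by (rule continuous_on_subset) auto
  obtain T where T: "1 \<le> T" and potter: "\<forall>t\<ge>T. \<forall>x\<ge>1.
      x powr (\<mu>-\<delta>) * r t \<le> exp \<delta> * r (x*t) \<and> r (x*t) \<le> exp \<delta> * x powr (\<mu>+\<delta>) * r t"
    using regularly_varying_potter[OF cont' rv \<delta>(1)] by auto
  obtain K where "\<forall>s\<ge>0. r s \<le> K * (1+s) powr (\<mu>+\<delta>)"
    using potter_envelope[OF cont pos' T exp_gt_zero[of \<delta>], of "\<mu>+\<delta>"] potter T \<delta> by auto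
  then have integrable: "(\<lambda>s. r s * r (s+t)) absolutely_integrable_on {0<..}" if "0 \<le> t" for t
    using autocovariance_integrable[OF cont pos' _ \<delta>(2) that] by blast
  obtain K1 where ratio: "\<forall>t\<ge>T. \<forall>u>0. r (u*t) / r t \<le> K1 * (u powr (\<mu>+\<delta>) + u powr (\<mu>-\<delta>))"
    using potter_ratio_bound[OF cont pos' _ exp_gt_zero[of \<delta>], of T "\<mu>-\<delta>" "\<mu>+\<delta>"] potter T mu \<delta>
    by auto
  have "(\<lambda>u. K1 * K1 * ((u powr (\<mu>+\<delta>) + u powr (\<mu>-\<delta>))
      * ((1+u) powr (\<mu>+\<delta>) + (1+u) powr (\<mu>-\<delta>)))) integrable_on {0<..}"
    using \<delta> by (intro integrable_on_mult_right two_term_power_product_integrable) auto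
  then have "((\<lambda>t. integral {0..} (\<lambda>s. r s * r (s+t)) / (t * (r t)\<^sup>2))
      \<longlongrightarrow> integral {0<..} (\<lambda>u. u powr \<mu> * (1+u) powr \<mu>)) at_top"
    using T pos' ratio integrable regularly_varying_ratio_tendsto[OF rv]
    by (intro autocovariance_limit[where g="\<lambda>u. K1 * (u powr (\<mu>+\<delta>) + u powr (\<mu>-\<delta>))" and T=T])
      (auto simp: mult_ac)
  then show ?thesis
    using integrable integrable_Ici_iff_Ioi autocovariance_constant[OF mu]
    unfolding absolutely_integrable_on_def by auto
qed

end
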